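(* Let $\Omega\subseteq\mathbb{R}^n$ be open and convex, let $f:\Omega\to\mathbb{R}$ be convex and differentiable with $\nabla f$ Lipschitz continuous with constant $L$ (extend $f$ by $+\infty$ outside $\Omega$), let $g:\mathbb{R}^n\to\mathbb{R}\cup\{+\infty\}$ be convex with closed sublevel sets, and let $h=f+g$ have compact sublevel sets and $h^\star=\inf_x h(x)<\infty$. Run the oracle-structured minimization method (described in the context) from $x^0\in\Omega$, with parameters satisfying $\mu_{\max}\tau_{\min}>2L/(1-\alpha)$. Then $h(x^k)\to h^\star$ as $k\to\infty$.
   Context: Oracle-structured minimization method (OSMM). Fixed parameters: memory $M\ge1$ (integer), $\alpha,\beta\in(0,1)$, $\tau_{\min}>0$, $0<\mu_{\min}\le\mu_{\max}$, $\gamma_{\rm dec}\in(0,1)$, $\gamma_{\rm inc}>1$, and an initial $\mu_0\in[\mu_{\min},\mu_{\max}]$. There is a constant $C$ and, for each $k$, a symmetric positive semidefinite matrix $H_k$ with $\|H_k\|_2\le C$ (otherwise arbitrary). For $k=0,1,2,\dots$: (1) $l_k(x)=\max_{i=\max\{0,k-M+1\},\dots,k}\big(f(x^i)+\nabla f(x^i)^T(x-x^i)\big)$; $\tau_k=\operatorname{Tr}(H_k)/n$; $\lambda_k=\mu_k(\tau_k+\tau_{\min})$. (2) $x^{k+1/2}=\operatorname*{argmin}_x\big(l_k(x)+g(x)+\tfrac12(x-x^k)^T(H_k+\lambda_kI)(x-x^k)\big)$, $v^k=x^{k+1/2}-x^k$. (3) With $\phi_k(t)=f(x^k+tv^k)+t\,g(x^{k+1/2})+(1-t)g(x^k)$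 for $t\in[0,1]$, let $t_k=\beta^j$ where $j$ is the smallest nonnegative integer with $\phi_k(t_k)\le h(x^k)-\frac{\alpha t_k}{2}(v^k)^T(H_k+\lambda_kI)v^k$; set $x^{k+1}=x^k+t_kv^k$. (4) $\mu_{k+1}=\max\{\gamma_{\rm dec}\mu_k,\mu_{\min}\}$ if $t_k=1$, and $\mu_{k+1}=\min\{\gamma_{\rm inc}\mu_k,\mu_{\max}\}$ if $t_k<1$. *)

theory Defs
  imports "HOL-Analysis.Analysis"
begin

definition extf :: "'a set \<Rightarrow> ('a \<Rightarrow> real) \<Rightarrow> 'a \<Rightarrow> ereal" where
  "extf \<Omega> f y = (if y \<in> \<Omega> then ereal (f y) else \<infinity>)"

definition convex_ereal :: "('a::real_vector \<Rightarrow> ereal) \<Rightarrow> bool" where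
  "convex_ereal g \<longleftrightarrow> (\<forall>x y t. 0 < t \<and> t < 1 \<longrightarrow>
      g ((1 - t) *\<^sub>R x + t *\<^sub>R y) \<le> ereal (1 - t) * g x + ereal t * g y)"

end

(*
  The merit values h(x_k) are finite and, by the Armijo condition, nonincreasing. Suppose they
  stayed above h(y) for some y. Since the cutting-plane model lies between f and its linearization
  at x_k, testing the prox subproblem with the points (1 - s) x_k + s y shows that the predicted
  decrease Delta_k = grad f(x_k) . v_k + g(x_{k+1/2}) - g(x_k) is uniformly negative; with the
  descent lemma this forces t_k -> 0 and t_k ||v_k||^2 -> 0. But the iterates stay in the compact
  sublevel set {h <= h(x_0)}, which lies at a uniform distance delta inside Omega, and a trial step
  that stays in Omega and is shorter than (1 - alpha) lambda_min / (2 L) is always accepted. So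
  every backtracked step has t_k >= T or t_k ||v_k||^2 >= beta delta^2, a contradiction.
*)

theory Submission
  imports Defs
begin

section \<open>Convex functions with Lipschitz gradient\<close>

lemma convex_on_gradient_inequality:
  fixes f :: "'a::real_inner \<Rightarrow> real"
  assumes f: "convex_on S f" and x: "x \<in> S" and y: "y \<in> S" and grad: "GDERIV f x :> D"
  shows "f x + D \<bullet> (y - x) \<le> f y"
proof -
  define u where "u = y - x"
  have line: "((\<lambda>t. x + t *\<^sub>R u) has_derivative (\<lambda>t. t *\<^sub>R u)) (at 0)"
    by (auto intro!: derivative_eq_intros)
  have "(f has_derivative (\<lambda>h. h \<bullet> D)) (at (x + 0 *\<^sub>R u))"
    using grad by (simp add: gderiv_def)
  from has_derivative_compose[OF line this]
  have "((\<lambda>t. f (x + t *\<^sub>R u)) has_derivative (\<lambda>t. (D \<bullet> u) * t)) (at 0)"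
    by (simp add: inner_commute mult.commute)
  then have "((\<lambda>t. f (x + t *\<^sub>R u)) has_real_derivative (D \<bullet> u)) (at 0 within {0<..})"
    unfolding has_field_derivative_def by (rule has_derivative_at_withinI)
  then have slope: "((\<lambda>t. (f (x + t *\<^sub>R u) - f x) / t) \<longlongrightarrow> D \<bullet> u) (at_right 0)"
    by (simp add: has_field_derivative_iff)
  have "\<forall>\<^sub>F t in at_right 0. (f (x + t *\<^sub>R u) - f x) / t \<le> f y - f x"
    using eventually_at_right_real[OF zero_less_one]
  proof eventually_elim
    case (elim t)
    have "f (x + t *\<^sub>R u) = f ((1 - t) *\<^sub>R x + t *\<^sub>R y)"
      by (simp add: u_def algebra_simps)
    also have "\<dots> \<le> (1 - t) * f x + t * f y"
      using elim x y by (intro convex_onD[OF f]) auto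
    finally show ?case
      using elim by (simp add: field_simps)
  qed
  from tendsto_upperbound[OF slope this] show ?thesis
    by (simp add: u_def)
qed

(* Convexity yields the descent lemma without integrating along the segment, at the price of
   the constant L instead of L/2. *)
lemma lipschitz_gradient_upper_bound:
  fixes f :: "'a::real_inner \<Rightarrow> real"
  assumes f: "convex_on S f" and x: "x \<in> S" and y: "y \<in> S"
    and grad: "GDERIV f x :> gradf x" "GDERIV f y :> gradf y"
    and lip: "norm (gradf y - gradf x) \<le> L * norm (y - x)"
  shows "f y \<le> f x + gradf x \<bullet> (y - x) + L * (norm (y - x))\<^sup>2"
proof -
  have "(gradf y - gradf x) \<bullet> (y - x) \<le> norm (gradf y - gradf x) * norm (y - x)"
    by (rule norm_cauchy_schwarz)
  also have "\<dots> \<le> L * (norm (y - x))\<^sup>2"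
    using mult_right_mono[OF lip norm_ge_zero] by (simp add: power2_eq_square mult.assoc)
  finally show ?thesis
    using convex_on_gradient_inequality[OF f y x grad(2)]
    by (simp add: inner_diff_left inner_commute[of _ "x - y"] inner_diff_right)
qed

section \<open>The proximal metric\<close>

lemma quadratic_form_le_onorm:
  fixes A :: "real^'n^'n"
  shows "w \<bullet> (A *v w) \<le> onorm (\<lambda>w. A *v w) * (norm w)\<^sup>2"
proof -
  have "w \<bullet> (A *v w) \<le> norm w * norm (A *v w)"
    by (rule norm_cauchy_schwarz)
  also have "\<dots> \<le> norm w * (onorm (\<lambda>w. A *v w) * norm w)"
    by (intro mult_left_mono onorm matrix_vector_mul_bounded_linear) auto
  finally show ?thesis
    by (simp add: power2_eq_square mult_ac)
qed

lemma quadratic_form_add_scaled_identity: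
  fixes A :: "real^'n^'n"
  shows "w \<bullet> ((A + c *\<^sub>R mat 1) *v w) = w \<bullet> (A *v w) + c * (norm w)\<^sup>2"
  by (simp add: matrix_vector_mult_add_rdistrib scaleR_matrix_vector_assoc[symmetric]
      inner_add_right power2_norm_eq_inner)

lemma diagonal_entry_eq_quadratic_form:
  fixes A :: "real^'n^'n"
  shows "A $ i $ i = axis i 1 \<bullet> (A *v axis i 1)"
  by (simp add: matrix_vector_mult_basis column_def inner_commute[of "axis i 1"]
      cart_eq_inner_axis[symmetric])

lemma trace_nonneg_if_psd:
  fixes A :: "real^'n^'n"
  assumes "\<And>w. 0 \<le> w \<bullet> (A *v w)"
  shows "0 \<le> trace A"
  unfolding trace_def diagonal_entry_eq_quadratic_form by (intro sum_nonneg assms)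

lemma trace_le_card_onorm:
  fixes A :: "real^'n^'n"
  shows "trace A \<le> real CARD('n) * onorm (\<lambda>w. A *v w)"
proof -
  have "trace A \<le> (\<Sum>i\<in>(UNIV::'n set). onorm (\<lambda>w. A *v w))"
    unfolding trace_def diagonal_entry_eq_quadratic_form
    using quadratic_form_le_onorm[of "axis _ 1" A] by (intro sum_mono) simp
  then show ?thesis
    by simp
qed

lemma regularized_metric_bounds:
  fixes H :: "real^'n^'n"
  assumes psd: "\<And>w. 0 \<le> w \<bullet> (H *v w)" and bound: "onorm (\<lambda>w. H *v w) \<le> C"
    and \<mu>: "\<mu>min \<le> \<mu>" "\<mu> \<le> \<mu>max" and pos: "0 < \<mu>min" "0 < \<tau>min"
  defines "Q \<equiv> H + (\<mu> * (trace H / real CARD('n) + \<tau>min)) *\<^sub>R mat 1"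
  shows "\<mu>min * \<tau>min * (norm w)\<^sup>2 \<le> w \<bullet> (Q *v w)"
    and "w \<bullet> (Q *v w) \<le> (C + \<mu>max * (C + \<tau>min)) * (norm w)\<^sup>2"
proof -
  define \<tau> where "\<tau> = trace H / real CARD('n)"
  have "trace H \<le> real CARD('n) * C"
    using trace_le_card_onorm[of H] bound by (meson mult_left_mono of_nat_0_le_iff order_trans)
  then have \<tau>: "0 \<le> \<tau>" "\<tau> \<le> C"
    using trace_nonneg_if_psd[OF psd] by (auto simp: \<tau>_def divide_simps mult.commute)
  have lam: "\<mu>min * \<tau>min \<le> \<mu> * (\<tau> + \<tau>min)" "\<mu> * (\<tau> + \<tau>min) \<le> \<mu>max * (C + \<tau>min)"
    using \<mu> pos \<tau> by (auto intro: mult_mono)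
  have Q: "w \<bullet> (Q *v w) = w \<bullet> (H *v w) + \<mu> * (\<tau> + \<tau>min) * (norm w)\<^sup>2"
    by (simp add: Q_def \<tau>_def quadratic_form_add_scaled_identity)
  show "\<mu>min * \<tau>min * (norm w)\<^sup>2 \<le> w \<bullet> (Q *v w)"
    using Q psd[of w] mult_right_mono[OF lam(1) zero_le_power2, of "norm w"] by simp
  have "w \<bullet> (H *v w) \<le> C * (norm w)\<^sup>2"
    using quadratic_form_le_onorm[of w H] mult_right_mono[OF bound zero_le_power2, of "norm w"] by simp
  then show "w \<bullet> (Q *v w) \<le> (C + \<mu>max * (C + \<tau>min)) * (norm w)\<^sup>2"
    using Q mult_right_mono[OF lam(2) zero_le_power2, of "norm w"] by (simp add: distrib_right)
qed

lemma safeguarded_update_bounds: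
  fixes \<mu> :: "nat \<Rightarrow> real"
  assumes "0 \<le> \<mu>min" "\<mu>min \<le> \<mu>max" "\<gamma>dec \<le> 1" "1 \<le> \<gamma>inc"
    and "\<mu>min \<le> \<mu> 0" "\<mu> 0 \<le> \<mu>max"
    and step: "\<And>k. \<mu> (Suc k) = (if b k then max (\<gamma>dec * \<mu> k) \<mu>min else min (\<gamma>inc * \<mu> k) \<mu>max)"
  shows "\<mu>min \<le> \<mu> k \<and> \<mu> k \<le> \<mu>max"
proof (induction k)
  case 0
  then show ?case
    using assms by simp
next
  case (Suc k)
  have "\<gamma>dec * \<mu> k \<le> \<mu> k" "\<mu> k \<le> \<gamma>inc * \<mu> k"
    using Suc assms mult_right_mono[of \<gamma>dec 1 "\<mu> k"] mult_right_mono[of 1 \<gamma>inc "\<mu> k"] by auto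
  then show ?case
    using Suc assms(2) by (auto simp: step)
qed

section \<open>Extended-real-valued objectives\<close>

lemma convex_erealD:
  assumes "convex_ereal g" "0 \<le> s" "s \<le> 1"
  shows "g ((1 - s) *\<^sub>R a + s *\<^sub>R b) \<le> ereal (1 - s) * g a + ereal s * g b"
  using assms unfolding convex_ereal_def
  by (cases "s = 0"; cases "s = 1") (auto simp: zero_ereal_def[symmetric])

lemma decreasing_values_tendsto_INF:
  fixes F :: "'a \<Rightarrow> ereal" and a :: "nat \<Rightarrow> real"
  assumes dec: "decseq a" and F_z: "\<And>k. F (z k) = ereal (a k)"
    and limit_below: "\<And>c y. a \<longlonglongrightarrow> c \<Longrightarrow> ereal c \<le> F y"
  shows "(\<lambda>k. F (z k)) \<longlonglongrightarrow> (INF y. F y)"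
proof -
  have lim: "(\<lambda>k. ereal (a k)) \<longlonglongrightarrow> (INF k. ereal (a k))"
    by (rule LIMSEQ_INF) (use dec in \<open>auto simp: decseq_def\<close>)
  have "(INF y. F y) \<le> ereal (a k)" for k
    using INF_lower[of "z k" UNIV F] by (simp add: F_z)
  then have "(INF y. F y) \<le> (INF k. ereal (a k))"
    by (rule INF_greatest)
  moreover have "(INF k. ereal (a k)) \<le> (INF y. F y)"
  proof (cases "INF k. ereal (a k)")
    case (real c)
    with lim have "a \<longlonglongrightarrow> c"
      by simp
    then show ?thesis
      using real by (auto intro: INF_greatest limit_below)
  next
    case PInf
    then show ?thesis
      using INF_lower[of 0 UNIV "\<lambda>k. ereal (a k)"] by simp
  qed simp
  ultimately have "(INF y. F y) = (INF k. ereal (a k))"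
    by (rule antisym)
  with lim show ?thesis
    by (simp add: F_z)
qed

section \<open>The method\<close>

definition composite_objective :: "'a set \<Rightarrow> ('a \<Rightarrow> real) \<Rightarrow> ('a \<Rightarrow> ereal) \<Rightarrow> 'a \<Rightarrow> ereal" where
  "composite_objective \<Omega> f g y = extf \<Omega> f y + g y"

definition line_search_objective ::
    "'a::real_vector set \<Rightarrow> ('a \<Rightarrow> real) \<Rightarrow> ('a \<Rightarrow> ereal) \<Rightarrow> 'a \<Rightarrow> 'a \<Rightarrow> real \<Rightarrow> ereal" where
  "line_search_objective \<Omega> f g x z t =
     extf \<Omega> f (x + t *\<^sub>R (z - x)) + ereal t * g z + ereal (1 - t) * g x"

definition sufficient_decrease ::
    "'a::real_vector set \<Rightarrow> ('a \<Rightarrow> real) \<Rightarrow> ('a \<Rightarrow> ereal) \<Rightarrow> real \<Rightarrow> ('a \<Rightarrow> real) \<Rightarrow>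
      'a \<Rightarrow> 'a \<Rightarrow> real \<Rightarrow> bool" where
  "sufficient_decrease \<Omega> f g \<alpha> P x z t \<longleftrightarrow>
     line_search_objective \<Omega> f g x z t \<le> composite_objective \<Omega> f g x - ereal (\<alpha> * t / 2 * P (z - x))"

(* The window {k + 1 - M..k} holds the last M iterates; by truncated subtraction it is {0..k}
   while k < M. *)
definition cutting_plane_model ::
    "('a::real_inner \<Rightarrow> real) \<Rightarrow> ('a \<Rightarrow> 'a) \<Rightarrow> (nat \<Rightarrow> 'a) \<Rightarrow> nat \<Rightarrow> nat \<Rightarrow> 'a \<Rightarrow> real" where
  "cutting_plane_model f gradf x M k y =
     Max ((\<lambda>i. f (x i) + gradf (x i) \<bullet> (y - x i)) ` {k + 1 - M..k})"

(* P k is the quadratic form of the proximal metric H k + lambda k I; only its uniform bounds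
   m and Lambda enter the argument. *)
locale osmm =
  fixes \<Omega> :: "'a::real_inner set" and f :: "'a \<Rightarrow> real" and gradf :: "'a \<Rightarrow> 'a"
    and g :: "'a \<Rightarrow> ereal" and L \<alpha> \<beta> m \<Lambda> :: real and M :: nat and P :: "nat \<Rightarrow> 'a \<Rightarrow> real"
    and x xh :: "nat \<Rightarrow> 'a" and j :: "nat \<Rightarrow> nat"
  assumes \<Omega>_open: "open \<Omega>" and \<Omega>_convex: "convex \<Omega>"
    and f_convex: "convex_on \<Omega> f"
    and f_grad: "\<And>y. y \<in> \<Omega> \<Longrightarrow> GDERIV f y :> gradf y"
    and f_lip: "\<And>y z. y \<in> \<Omega> \<Longrightarrow> z \<in> \<Omega> \<Longrightarrow> norm (gradf y - gradf z) \<le> L * norm (y - z)"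
    and L_pos: "0 < L"
    and g_not_minf: "\<And>y. g y \<noteq> -\<infinity>" and g_convex: "convex_ereal g"
    and compact_sublevel: "\<And>c. compact {y. composite_objective \<Omega> f g y \<le> ereal c}"
    and M_pos: "1 \<le> M"
    and \<alpha>: "0 < \<alpha>" "\<alpha> < 1" and \<beta>: "0 < \<beta>" "\<beta> < 1"
    and m_pos: "0 < m"
    and P_lower: "\<And>k w. m * (norm w)\<^sup>2 \<le> P k w"
    and P_upper: "\<And>k w. P k w \<le> \<Lambda> * (norm w)\<^sup>2"
    and x0: "x 0 \<in> \<Omega>" "g (x 0) < \<infinity>"
    and prox: "\<And>k y.
      ereal (cutting_plane_model f gradf x M k (xh k)) + g (xh k) + ereal (P k (xh k - x k) / 2)
      \<le> ereal (cutting_plane_model f gradf x M k y) + g y + ereal (P k (y - x k) / 2)"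
    and accepted: "\<And>k. sufficient_decrease \<Omega> f g \<alpha> (P k) (x k) (xh k) (\<beta> ^ j k)"
    and rejected: "\<And>k i. i < j k \<Longrightarrow> \<not> sufficient_decrease \<Omega> f g \<alpha> (P k) (x k) (xh k) (\<beta> ^ i)"
    and x_step: "\<And>k. x (Suc k) = x k + \<beta> ^ j k *\<^sub>R (xh k - x k)"
begin

abbreviation h :: "'a \<Rightarrow> ereal" where
  "h \<equiv> composite_objective \<Omega> f g"

abbreviation t :: "nat \<Rightarrow> real" where
  "t k \<equiv> \<beta> ^ j k"

abbreviation v :: "nat \<Rightarrow> 'a" where
  "v k \<equiv> xh k - x k"

lemma step_size_bounds: "0 < t k" "t k \<le> 1"
  using \<beta> by (auto simp: power_le_one)

lemma P_nonneg: "0 \<le> P k w"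
  by (rule order_trans[OF _ P_lower]) (simp add: m_pos less_imp_le)

lemma h_outside_domain: "y \<notin> \<Omega> \<Longrightarrow> h y = \<infinity>"
  using g_not_minf[of y] by (simp add: composite_objective_def extf_def)

lemma feasible_step:
  assumes "x k \<in> \<Omega>" "g (x k) \<noteq> \<infinity>"
  shows "g (xh k) \<noteq> \<infinity>" "x (Suc k) \<in> \<Omega>" "g (x (Suc k)) \<noteq> \<infinity>"
proof -
  obtain gk where gk: "g (x k) = ereal gk"
    using assms(2) g_not_minf[of "x k"] by (cases "g (x k)") auto
  have "h (x k) \<noteq> \<infinity>"
    using assms(1) by (simp add: composite_objective_def extf_def gk)
  then have "line_search_objective \<Omega> f g (x k) (xh k) (t k) \<noteq> \<infinity>"
    using accepted[of k] unfolding sufficient_decrease_def by (cases "h (x k)") auto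
  then have sum: "extf \<Omega> f (x (Suc k)) + ereal (t k) * g (xh k) + ereal ((1 - t k) * gk) \<noteq> \<infinity>"
    by (simp add: line_search_objective_def x_step gk)
  have "extf \<Omega> f (x (Suc k)) \<noteq> -\<infinity>"
    by (simp add: extf_def)
  moreover have "ereal (t k) * g (xh k) \<noteq> -\<infinity>"
    using step_size_bounds[of k] g_not_minf[of "xh k"] by (cases "g (xh k)") auto
  ultimately have "extf \<Omega> f (x (Suc k)) \<noteq> \<infinity>" "ereal (t k) * g (xh k) \<noteq> \<infinity>"
    using sum by (cases "extf \<Omega> f (x (Suc k))"; cases "ereal (t k) * g (xh k)"; simp)+
  then show finite: "g (xh k) \<noteq> \<infinity>" and "x (Suc k) \<in> \<Omega>"
    using step_size_bounds[of k] by (auto simp: extf_def split: if_splits)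
  have "g (x (Suc k)) \<le> ereal (1 - t k) * g (x k) + ereal (t k) * g (xh k)"
    using convex_erealD[OF g_convex, of "t k" "x k" "xh k"] step_size_bounds[of k]
    by (simp add: x_step algebra_simps)
  then show "g (x (Suc k)) \<noteq> \<infinity>"
    using finite g_not_minf[of "xh k"] gk by (cases "g (xh k)") auto
qed

lemma iterate_feasible: "x k \<in> \<Omega> \<and> g (x k) \<noteq> \<infinity>"
proof (induction k)
  case 0
  then show ?case
    using x0 by simp
next
  case (Suc k)
  then show ?case
    using feasible_step(2,3) by blast
qed

lemma x_in_domain: "x k \<in> \<Omega>"
  using iterate_feasible by blast

definition gx :: "nat \<Rightarrow> real" where
  "gx k = real_of_ereal (g (x k))"

definition gxh :: "nat \<Rightarrow> real" where
  "gxh k = real_of_ereal (g (xh k))"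

definition hx :: "nat \<Rightarrow> real" where
  "hx k = f (x k) + gx k"

lemma g_x_eq: "g (x k) = ereal (gx k)"
  using iterate_feasible[of k] g_not_minf[of "x k"] by (cases "g (x k)") (auto simp: gx_def)

lemma g_xh_eq: "g (xh k) = ereal (gxh k)"
  using feasible_step(1)[of k] iterate_feasible[of k] g_not_minf[of "xh k"]
  by (cases "g (xh k)") (auto simp: gxh_def)

lemma h_x_eq: "h (x k) = ereal (hx k)"
  using x_in_domain[of k] by (simp add: composite_objective_def extf_def g_x_eq hx_def)

lemma sufficient_decrease_iff:
  assumes "x k + s *\<^sub>R v k \<in> \<Omega>"
  shows "sufficient_decrease \<Omega> f g \<alpha> (P k) (x k) (xh k) s \<longleftrightarrow>
    f (x k + s *\<^sub>R v k) + s * gxh k + (1 - s) * gx k \<le> hx k - \<alpha> * s / 2 * P k (v k)"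
  using assms
  by (simp add: sufficient_decrease_def line_search_objective_def extf_def g_x_eq g_xh_eq h_x_eq)

lemma gx_step: "gx (Suc k) \<le> t k * gxh k + (1 - t k) * gx k"
proof -
  have "g (x (Suc k)) \<le> ereal (1 - t k) * g (x k) + ereal (t k) * g (xh k)"
    using convex_erealD[OF g_convex, of "t k" "x k" "xh k"] step_size_bounds[of k]
    by (simp add: x_step algebra_simps)
  then show ?thesis
    unfolding g_x_eq g_xh_eq by (simp add: algebra_simps)
qed

lemma hx_armijo: "hx (Suc k) \<le> hx k - \<alpha> * t k / 2 * P k (v k)"
  using accepted[of k] gx_step[of k] x_in_domain[of "Suc k"]
  by (simp add: sufficient_decrease_iff x_step hx_def)

lemma hx_decseq: "decseq hx"
proof (rule decseq_SucI)
  fix k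
  have "0 \<le> \<alpha> * t k / 2 * P k (v k)"
    using \<alpha> step_size_bounds[of k] P_nonneg[of k "v k"] by simp
  then show "hx (Suc k) \<le> hx k"
    using hx_armijo[of k] by linarith
qed

lemma model_le_fun:
  assumes "y \<in> \<Omega>"
  shows "cutting_plane_model f gradf x M k y \<le> f y"
  unfolding cutting_plane_model_def using M_pos
  by (subst Max_le_iff)
    (auto intro: convex_on_gradient_inequality[OF f_convex x_in_domain assms f_grad[OF x_in_domain]])

lemma linearization_le_model: "f (x k) + gradf (x k) \<bullet> (y - x k) \<le> cutting_plane_model f gradf x M k y"
  unfolding cutting_plane_model_def using M_pos by (intro Max_ge) (auto intro: rev_image_eqI)

(* An upper bound for the directional derivative of h at x k along v k, by convexity of g. *)
definition \<Delta> :: "nat \<Rightarrow> real" where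
  "\<Delta> k = gradf (x k) \<bullet> v k + gxh k - gx k"

lemma prox_bound:
  assumes "y \<in> \<Omega>" "g y = ereal c"
  shows "\<Delta> k + P k (v k) / 2 \<le> f y + c - hx k + P k (y - x k) / 2"
  using prox[of k y] model_le_fun[OF assms(1), of k] linearization_le_model[of k "xh k"] assms(2)
  by (simp add: \<Delta>_def hx_def g_xh_eq)

lemma \<Delta>_le: "\<Delta> k \<le> - P k (v k) / 2"
proof -
  have "P k 0 = 0"
    using P_nonneg[of k 0] P_upper[of k 0] by simp
  then show ?thesis
    using prox_bound[OF x_in_domain g_x_eq, of k k] by (simp add: hx_def)
qed

lemma short_step_accepted:
  assumes s: "0 < s" "s \<le> 1" and dom: "x k + s *\<^sub>R v k \<in> \<Omega>"
    and small: "L * s \<le> (1 - \<alpha>) * m / 2"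
  shows "sufficient_decrease \<Omega> f g \<alpha> (P k) (x k) (xh k) s"
proof -
  have descent: "f (x k + s *\<^sub>R v k) \<le> f (x k) + s * (gradf (x k) \<bullet> v k) + L * s\<^sup>2 * (norm (v k))\<^sup>2"
    using lipschitz_gradient_upper_bound[OF f_convex x_in_domain[of k] dom
        f_grad[OF x_in_domain] f_grad[OF dom] f_lip[OF dom x_in_domain]] s
    by (simp add: power_mult_distrib mult.assoc)
  have "L * s\<^sup>2 * (norm (v k))\<^sup>2 = s * ((L * s) * (norm (v k))\<^sup>2)"
    by (simp add: power2_eq_square)
  also have "\<dots> \<le> s * ((1 - \<alpha>) * m / 2 * (norm (v k))\<^sup>2)"
    using s small by (intro mult_left_mono mult_right_mono) auto
  also have "\<dots> = s * ((1 - \<alpha>) / 2) * (m * (norm (v k))\<^sup>2)"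
    by simp
  also have "\<dots> \<le> s * ((1 - \<alpha>) / 2) * P k (v k)"
    using s \<alpha> P_lower by (intro mult_left_mono) auto
  finally have curvature: "L * s\<^sup>2 * (norm (v k))\<^sup>2 \<le> s * ((1 - \<alpha>) / 2) * P k (v k)" .
  have "s * \<Delta> k \<le> s * (- P k (v k) / 2)"
    using \<Delta>_le s by (intro mult_left_mono) auto
  with descent curvature show ?thesis
    unfolding sufficient_decrease_iff[OF dom] \<Delta>_def hx_def by (simp add: algebra_simps)
qed

lemma hx_step_bound: "hx (Suc k) \<le> hx k + t k * \<Delta> k + L * (t k)\<^sup>2 * (norm (v k))\<^sup>2"
proof -
  have "f (x (Suc k)) \<le> f (x k) + t k * (gradf (x k) \<bullet> v k) + L * (t k)\<^sup>2 * (norm (v k))\<^sup>2"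
    using lipschitz_gradient_upper_bound[OF f_convex x_in_domain[of k] x_in_domain[of "Suc k"]
        f_grad[OF x_in_domain] f_grad[OF x_in_domain] f_lip[OF x_in_domain x_in_domain]]
      step_size_bounds[of k]
    by (simp add: x_step power_mult_distrib mult.assoc)
  then show ?thesis
    using gx_step[of k] by (simp add: hx_def \<Delta>_def algebra_simps)
qed

section \<open>Convergence\<close>

lemma iterates_in_initial_sublevel: "h (x k) \<le> ereal (hx 0)"
  using decseqD[OF hx_decseq, of 0 k] by (simp add: h_x_eq)

lemma uniform_interior_radius:
  obtains \<delta> where "0 < \<delta>" "\<And>k. ball (x k) \<delta> \<subseteq> \<Omega>"
proof -
  have "{y. h y \<le> ereal (hx 0)} \<subseteq> \<Omega>"
    using h_outside_domain by force
  from compact_subset_open_imp_ball_epsilon_subset[OF compact_sublevel \<Omega>_open this]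
  obtain \<delta> where "0 < \<delta>" "(\<Union>y\<in>{y. h y \<le> ereal (hx 0)}. ball y \<delta>) \<subseteq> \<Omega>" .
  then have "ball (x k) \<delta> \<subseteq> \<Omega>" for k
    using iterates_in_initial_sublevel[of k] by blast
  with \<open>0 < \<delta>\<close> show ?thesis
    by (rule that)
qed

lemma bounded_iterates: "bounded (range x)"
  by (rule bounded_subset[OF compact_imp_bounded[OF compact_sublevel[of "hx 0"]]])
    (auto intro: iterates_in_initial_sublevel)

lemma step_or_progress_bounded_below:
  obtains T \<eta> where "0 < T" "0 < \<eta>" "\<And>k. T \<le> t k \<or> \<eta> \<le> t k * (norm (v k))\<^sup>2"
proof -
  obtain \<delta> where \<delta>: "0 < \<delta>" "\<And>k. ball (x k) \<delta> \<subseteq> \<Omega>"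
    using uniform_interior_radius by blast
  define T where "T = \<beta> * min 1 ((1 - \<alpha>) * m / (2 * L))"
  have "T \<le> \<beta>"
    using \<beta> by (simp add: T_def mult_left_le)
  have "T \<le> t k \<or> \<beta> * \<delta>\<^sup>2 \<le> t k * (norm (v k))\<^sup>2" for k
  proof (cases "j k")
    case 0
    then show ?thesis
      using \<open>T \<le> \<beta>\<close> \<beta> by simp
  next
    case (Suc i)
    define \<tau> where "\<tau> = \<beta> ^ i"
    have t: "t k = \<beta> * \<tau>" and \<tau>: "0 < \<tau>" "\<tau> \<le> 1"
      using \<beta> by (simp_all add: Suc \<tau>_def power_le_one)
    have "\<not> sufficient_decrease \<Omega> f g \<alpha> (P k) (x k) (xh k) \<tau>"
      using rejected[of i k] by (simp add: Suc \<tau>_def)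
    \<comment> \<open>the rejected trial step either leaves \<open>\<Omega>\<close>, hence is longer than \<open>\<delta>\<close>,
      or is too long for the descent lemma\<close>
    then have "x k + \<tau> *\<^sub>R v k \<notin> \<Omega> \<or> (1 - \<alpha>) * m / 2 < L * \<tau>"
      using short_step_accepted[OF \<tau>] by force
    then show ?thesis
    proof
      assume "x k + \<tau> *\<^sub>R v k \<notin> \<Omega>"
      then have "\<delta> \<le> \<tau> * norm (v k)"
        using \<delta>(2)[of k] \<tau> by (force simp: dist_norm)
      then have "\<beta> * \<delta>\<^sup>2 \<le> \<beta> * (\<tau> * norm (v k))\<^sup>2"
        using \<delta> \<beta> by (intro mult_left_mono power_mono) auto
      also have "\<dots> = \<beta> * \<tau> * (\<tau> * (norm (v k))\<^sup>2)"
        by (simp add: power2_eq_square)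
      also have "\<dots> \<le> t k * (norm (v k))\<^sup>2"
        using \<tau> \<beta> by (simp add: t mult_left_le_one_le mult_le_cancel_left1 mult_right_mono)
      finally show ?thesis ..
    next
      assume "(1 - \<alpha>) * m / 2 < L * \<tau>"
      then have "(1 - \<alpha>) * m / (2 * L) \<le> \<tau>"
        using L_pos by (simp add: field_simps)
      then show ?thesis
        using \<beta> by (simp add: T_def t min_le_iff_disj)
    qed
  qed
  then show ?thesis
    using that[of T "\<beta> * \<delta>\<^sup>2"] \<alpha> \<beta> \<delta> m_pos L_pos by (simp add: T_def)
qed

lemma hx_differences_vanish:
  assumes "hx \<longlonglongrightarrow> c"
  shows "(\<lambda>k. hx k - hx (Suc k)) \<longlonglongrightarrow> 0"
  using tendsto_diff[OF assms LIMSEQ_Suc[OF assms]] by simp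

lemma weighted_steps_vanish:
  assumes "hx \<longlonglongrightarrow> c"
  shows "(\<lambda>k. t k * (norm (v k))\<^sup>2) \<longlonglongrightarrow> 0"
proof (rule Lim_null_comparison)
  have "norm (t k * (norm (v k))\<^sup>2) \<le> 2 / (\<alpha> * m) * (hx k - hx (Suc k))" for k
  proof -
    have "norm (t k * (norm (v k))\<^sup>2) = 2 / (\<alpha> * m) * (\<alpha> * t k / 2 * (m * (norm (v k))\<^sup>2))"
      using \<alpha> m_pos step_size_bounds[of k] by (simp add: field_simps)
    also have "\<dots> \<le> 2 / (\<alpha> * m) * (\<alpha> * t k / 2 * P k (v k))"
      using \<alpha> m_pos step_size_bounds[of k] P_lower by (intro mult_left_mono) auto
    also have "\<dots> \<le> 2 / (\<alpha> * m) * (hx k - hx (Suc k))"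
      using hx_armijo[of k] \<alpha> m_pos by (intro mult_left_mono) auto
    finally show ?thesis .
  qed
  then show "\<forall>\<^sub>F k in sequentially. norm (t k * (norm (v k))\<^sup>2) \<le> 2 / (\<alpha> * m) * (hx k - hx (Suc k))"
    by (intro always_eventually allI)
  show "(\<lambda>k. 2 / (\<alpha> * m) * (hx k - hx (Suc k))) \<longlonglongrightarrow> 0"
    by (rule tendsto_mult_right_zero[OF hx_differences_vanish[OF assms]])
qed

lemma step_sizes_vanish:
  assumes lim: "hx \<longlonglongrightarrow> c" and e: "0 < e" "\<And>k. \<Delta> k \<le> - e"
  shows "(\<lambda>k. t k) \<longlonglongrightarrow> 0"
proof (rule Lim_null_comparison)
  have "t k \<le> (hx k - hx (Suc k) + L * (t k * (norm (v k))\<^sup>2)) / e" for k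
  proof -
    have "t k * \<Delta> k \<le> - (e * t k)"
      using mult_left_mono[OF e(2), of "t k"] step_size_bounds[of k] by (simp add: mult.commute)
    moreover have "(t k)\<^sup>2 * (norm (v k))\<^sup>2 \<le> t k * (norm (v k))\<^sup>2"
      using step_size_bounds[of k] by (intro mult_right_mono) (auto simp: power2_eq_square)
    then have "L * (t k)\<^sup>2 * (norm (v k))\<^sup>2 \<le> L * (t k * (norm (v k))\<^sup>2)"
      using L_pos by (simp add: mult.assoc)
    ultimately have "e * t k \<le> hx k - hx (Suc k) + L * (t k * (norm (v k))\<^sup>2)"
      using hx_step_bound[of k] by linarith
    then show ?thesis
      using e(1) by (simp add: field_simps)
  qed
  then show "\<forall>\<^sub>F k in sequentially. norm (t k) \<le> (hx k - hx (Suc k) + L * (t k * (norm (v k))\<^sup>2)) / e"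
    using step_size_bounds by (intro always_eventually) (simp add: abs_of_pos)
  have "(\<lambda>k. hx k - hx (Suc k) + L * (t k * (norm (v k))\<^sup>2)) \<longlonglongrightarrow> 0 + L * 0"
    by (intro tendsto_intros hx_differences_vanish[OF lim] weighted_steps_vanish[OF lim])
  then show "(\<lambda>k. (hx k - hx (Suc k) + L * (t k * (norm (v k))\<^sup>2)) / e) \<longlonglongrightarrow> 0"
    using tendsto_divide[of _ 0 sequentially "\<lambda>_. e" e] e(1) by simp
qed

lemma prox_bound_convex_combination:
  assumes y: "y \<in> \<Omega>" "g y = ereal c" and s: "0 \<le> s" "s \<le> 1"
  shows "\<Delta> k \<le> s * (f y + c - hx k) + s\<^sup>2 * \<Lambda> * (norm (y - x k))\<^sup>2 / 2"
proof -
  define z where "z = (1 - s) *\<^sub>R x k + s *\<^sub>R y"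
  have z_dom: "z \<in> \<Omega>"
    unfolding z_def using s y x_in_domain by (intro convexD_alt[OF \<Omega>_convex]) auto
  have "g z \<le> ereal (1 - s) * g (x k) + ereal s * g y"
    unfolding z_def using convex_erealD[OF g_convex s] .
  then have gz: "g z \<le> ereal ((1 - s) * gx k + s * c)"
    by (simp add: g_x_eq y(2))
  then obtain cz where cz: "g z = ereal cz" "cz \<le> (1 - s) * gx k + s * c"
    using g_not_minf[of z] by (cases "g z") auto
  have fz: "f z \<le> (1 - s) * f (x k) + s * f y"
    unfolding z_def using s y x_in_domain by (intro convex_onD[OF f_convex]) auto
  have "P k (z - x k) \<le> \<Lambda> * (norm (s *\<^sub>R (y - x k)))\<^sup>2"
    using P_upper by (simp add: z_def algebra_simps)
  then have Pz: "P k (z - x k) \<le> s\<^sup>2 * \<Lambda> * (norm (y - x k))\<^sup>2"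
    using s by (simp add: power_mult_distrib mult_ac)
  show ?thesis
    using prox_bound[OF z_dom cz(1), of k] P_nonneg[of k "v k"] cz(2) fz Pz
    by (simp add: hx_def algebra_simps)
qed

lemma uniform_descent:
  assumes below: "h y < ereal c" and above: "\<And>k. c \<le> hx k"
  obtains e where "0 < e" "\<And>k. \<Delta> k \<le> - e"
proof -
  have y: "y \<in> \<Omega>"
    using below h_outside_domain by force
  then obtain gy where gy: "g y = ereal gy"
    using below g_not_minf[of y] by (cases "g y") (auto simp: composite_objective_def extf_def)
  define gap where "gap = c - (f y + gy)"
  have gap: "0 < gap"
    using below y by (simp add: gap_def composite_objective_def extf_def gy)
  obtain a where a: "\<And>k. norm (x k) \<le> a"
    using bounded_iterates by (auto simp: bounded_iff)
  define D where "D = \<bar>\<Lambda>\<bar> * (norm y + a)\<^sup>2 + 1"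
  have D: "0 < D" "\<And>k. \<Lambda> * (norm (y - x k))\<^sup>2 \<le> D"
  proof -
    show "0 < D"
      by (simp add: D_def add_nonneg_pos)
    fix k
    have "norm (y - x k) \<le> norm y + a"
      using norm_triangle_ineq4[of y "x k"] a[of k] by linarith
    then have "(norm (y - x k))\<^sup>2 \<le> (norm y + a)\<^sup>2"
      by (intro power_mono) auto
    then show "\<Lambda> * (norm (y - x k))\<^sup>2 \<le> D"
      unfolding D_def by (smt (verit) abs_ge_self abs_ge_zero mult_mono zero_le_power2)
  qed
  define s where "s = min 1 (gap / D)"
  have s: "0 < s" "s \<le> 1" "s * D \<le> gap"
    using gap D by (auto simp: s_def min_def field_simps)
  have "\<Delta> k \<le> - (s * gap / 2)" for k
  proof -
    have "s * (f y + gy - hx k) \<le> - (s * gap)"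
      using above[of k] s by (simp add: gap_def mult_left_mono flip: mult_minus_right)
    moreover have "s\<^sup>2 * \<Lambda> * (norm (y - x k))\<^sup>2 \<le> s * gap"
    proof -
      have "s\<^sup>2 * \<Lambda> * (norm (y - x k))\<^sup>2 = s * (s * (\<Lambda> * (norm (y - x k))\<^sup>2))"
        by (simp add: power2_eq_square mult_ac)
      also have "\<dots> \<le> s * (s * D)"
        using D(2)[of k] s by (intro mult_left_mono) auto
      also have "\<dots> \<le> s * gap"
        using s by (intro mult_left_mono) auto
      finally show ?thesis .
    qed
    ultimately show ?thesis
      using prox_bound_convex_combination[OF y gy, of s k] s by simp
  qed
  then show ?thesis
    using that[of "s * gap / 2"] s gap by simp
qed

lemma limit_le_objective:
  assumes lim: "hx \<longlonglongrightarrow> c"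
  shows "ereal c \<le> h y"
proof (rule ccontr)
  assume "\<not> ereal c \<le> h y"
  then have "h y < ereal c"
    by simp
  then obtain e where "0 < e" "\<And>k. \<Delta> k \<le> - e"
    using uniform_descent decseq_ge[OF hx_decseq lim] by blast
  then have "(\<lambda>k. t k) \<longlonglongrightarrow> 0"
    by (rule step_sizes_vanish[OF lim])
  moreover obtain T \<eta> where T\<eta>: "0 < T" "0 < \<eta>" "\<And>k. T \<le> t k \<or> \<eta> \<le> t k * (norm (v k))\<^sup>2"
    using step_or_progress_bounded_below by blast
  ultimately have "\<forall>\<^sub>F k in sequentially. t k < T \<and> t k * (norm (v k))\<^sup>2 < \<eta>"
    using order_tendstoD(2)[OF weighted_steps_vanish[OF lim]]
    by (intro eventually_conj) (auto intro: order_tendstoD(2))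
  then obtain k where "t k < T" "t k * (norm (v k))\<^sup>2 < \<eta>"
    by (auto simp: eventually_sequentially)
  with T\<eta>(3)[of k] show False
    by linarith
qed

theorem iterates_tendsto_INF: "(\<lambda>k. h (x k)) \<longlonglongrightarrow> (INF y. h y)"
  by (rule decreasing_values_tendsto_INF[where F = h and z = x, OF hx_decseq h_x_eq limit_le_objective])

end

theorem mainTheorem3:
  fixes \<Omega> :: "(real^'n) set"
    and f :: "real^'n \<Rightarrow> real" and gradf :: "real^'n \<Rightarrow> real^'n"
    and g :: "real^'n \<Rightarrow> ereal"
    and L C \<alpha> \<beta> \<tau>min \<mu>min \<mu>max \<gamma>dec \<gamma>inc :: real
    and M :: nat
    and H :: "nat \<Rightarrow> real^'n^'n"
    and x xh :: "nat \<Rightarrow> real^'n"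
    and \<mu> :: "nat \<Rightarrow> real"
    and j :: "nat \<Rightarrow> nat"
  defines "h \<equiv> (\<lambda>y. extf \<Omega> f y + g y)"
  defines "lam \<equiv> (\<lambda>k. \<mu> k * (trace (H k) / real CARD('n) + \<tau>min))"
  defines "Q \<equiv> (\<lambda>k. H k + lam k *\<^sub>R mat 1)"
  defines "l \<equiv> (\<lambda>k y. Max ((\<lambda>i. f (x i) + gradf (x i) \<bullet> (y - x i)) ` {k + 1 - M..k}))"
  defines "v \<equiv> (\<lambda>k. xh k - x k)"
  defines "\<phi> \<equiv> (\<lambda>k t. extf \<Omega> f (x k + t *\<^sub>R v k) + ereal t * g (xh k) + ereal (1 - t) * g (x k))"
  assumes \<Omega>_open: "open \<Omega>" and \<Omega>_convex: "convex \<Omega>"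
    and f_convex: "convex_on \<Omega> f"
    and f_grad: "\<And>y. y \<in> \<Omega> \<Longrightarrow> GDERIV f y :> gradf y"
    and f_lip: "\<And>y z. y \<in> \<Omega> \<Longrightarrow> z \<in> \<Omega> \<Longrightarrow> norm (gradf y - gradf z) \<le> L * norm (y - z)"
    and g_not_minf: "\<And>y. g y \<noteq> -\<infinity>"
    and g_convex: "convex_ereal g"
    and g_closed_sublevel: "\<And>c::real. closed {y. g y \<le> ereal c}"
    and h_compact_sublevel: "\<And>c::real. compact {y. h y \<le> ereal c}"
    and hstar_fin: "(INF y. h y) < \<infinity>"
    and M_pos: "M \<ge> 1"
    and \<alpha>: "0 < \<alpha>" "\<alpha> < 1" and \<beta>: "0 < \<beta>" "\<beta> < 1"
    and \<tau>min: "\<tau>min > 0"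
    and \<mu>minmax: "0 < \<mu>min" "\<mu>min \<le> \<mu>max"
    and \<gamma>dec: "0 < \<gamma>dec" "\<gamma>dec < 1" and \<gamma>inc: "\<gamma>inc > 1"
    and \<mu>0: "\<mu>min \<le> \<mu> 0" "\<mu> 0 \<le> \<mu>max"
    and param: "\<mu>max * \<tau>min > 2 * L / (1 - \<alpha>)"
    and H_sym: "\<And>k. transpose (H k) = H k"
    and H_psd: "\<And>k w. 0 \<le> w \<bullet> (H k *v w)"
    and H_bound: "\<And>k. onorm (\<lambda>w. H k *v w) \<le> C"
    and x0: "x 0 \<in> \<Omega>" and x0_dom: "g (x 0) < \<infinity>"
    and prox: "\<And>k y. ereal (l k (xh k)) + g (xh k) + ereal ((xh k - x k) \<bullet> (Q k *v (xh k - x k)) / 2)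
                 \<le> ereal (l k y) + g y + ereal ((y - x k) \<bullet> (Q k *v (y - x k)) / 2)"
    and ls_ok: "\<And>k. \<phi> k (\<beta> ^ j k) \<le> h (x k) - ereal (\<alpha> * \<beta> ^ j k / 2 * (v k \<bullet> (Q k *v v k)))"
    and ls_min: "\<And>k i. i < j k \<Longrightarrow> \<not> (\<phi> k (\<beta> ^ i) \<le> h (x k) - ereal (\<alpha> * \<beta> ^ i / 2 * (v k \<bullet> (Q k *v v k))))"
    and x_step: "\<And>k. x (Suc k) = x k + (\<beta> ^ j k) *\<^sub>R v k"
    and \<mu>_step: "\<And>k. \<mu> (Suc k) = (if \<beta> ^ j k = 1 then max (\<gamma>dec * \<mu> k) \<mu>min else min (\<gamma>inc * \<mu> k) \<mu>max)"
  shows "(\<lambda>k. h (x k)) \<longlonglongrightarrow> (INF y. h y)"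
proof -
  have \<mu>_bounds: "\<mu>min \<le> \<mu> k" "\<mu> k \<le> \<mu>max" for k
    using safeguarded_update_bounds[of \<mu>min \<mu>max \<gamma>dec \<gamma>inc \<mu>, OF _ _ _ _ \<mu>0 \<mu>_step]
      \<mu>minmax \<gamma>dec \<gamma>inc by auto
  note metric_bounds = regularized_metric_bounds[OF H_psd H_bound \<mu>_bounds \<mu>minmax(1) \<tau>min,
      folded lam_def Q_def]
  have lip: "norm (gradf y - gradf z) \<le> max L 1 * norm (y - z)" if "y \<in> \<Omega>" "z \<in> \<Omega>" for y z
    using f_lip[OF that] by (smt (verit) max.cobounded1 mult_right_mono norm_ge_zero)
  have line_search_condition:
    "sufficient_decrease \<Omega> f g \<alpha> (\<lambda>w. w \<bullet> (Q k *v w)) (x k) (xh k) s \<longleftrightarrow>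
       \<phi> k s \<le> h (x k) - ereal (\<alpha> * s / 2 * (v k \<bullet> (Q k *v v k)))" for k s
    by (simp add: sufficient_decrease_def line_search_objective_def composite_objective_def
        \<phi>_def h_def v_def)
  interpret osmm \<Omega> f gradf g "max L 1" \<alpha> \<beta> "\<mu>min * \<tau>min" "C + \<mu>max * (C + \<tau>min)" M
    "\<lambda>k w. w \<bullet> (Q k *v w)" x xh j
    using assms lip metric_bounds line_search_condition
    by unfold_locales
      (auto simp: composite_objective_def h_def cutting_plane_model_def l_def v_def)
  show ?thesis
    using iterates_tendsto_INF by (simp add: composite_objective_def h_def)
qed

end
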